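(* The exposure difference $ED$ satisfies boundedness, whereas none of the exposure metrics $ER$, $DTD$, $DTR$, $DID$, $DIR$ satisfies boundedness. Here a metric $m$ satisfies boundedness if there are $v_{\min},v_{\max}\in\mathbb R$ such that for every population $\mathcal D$, every candidate set $D\subseteq\mathcal D$ and every ranking $r$ of $D$, the value $m(r)$ is well-defined and $v_{\min}\le m(r)\le v_{\max}$.
   Context: A population is a finite set $\mathcal{D}$ of candidates partitioned into two nonempty groups, a non-protected group $G_0$ and a protected group $G_1$; each candidate $d$ has a relevance score $y(d)\in\mathbb R$. For a candidate set $D\subseteq\mathcal D$ with $n=|D|$, a ranking is a bijection $r:\{1,\dots,n\}\to D$ and $r^{-1}(d)$ is the position of $d$. Position bias $b(k)=1/\log_2(k+1)$. Exposure metrics: for $G\in\{G_0,G_1\}$, $\mathrm{Exposure}(G|r)=\frac{1}{|G|}\sum_{d\in G\cap D} b(r^{-1}(d))$, $Y(G)=\frac1{|G|}\sum_{d\in G}y(d)$, $CTR(G|r)=\frac1{|G|}\sum_{d\in G\cap D} b(r^{-1}(d))\,y(d)$ ($|G|$ is the group size in the whole population). $ED(r)=\mathrm{Exposure}(G_1|r)-\mathrm{Exposure}(G_0|r)$, $ER(r)=\mathrm{Exposure}(G_1|r)/\mathrm{Exposure}(G_0|r)$, $DTD(r)=\frac{\mathrm{Exposure}(G_1|r)}{Y(G_1)}-\frac{\mathrm{Exposure}(G_0|r)}{Y(G_0)}$, $DTR(r)=\frac{\mathrm{Exposure}(G_1|r)}{\mathrm{Exposure}(G_0|r)}\cdot\frac{Y(G_0)}{Y(G_1)}$,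 $DID(r)=\frac{CTR(G_1|r)}{Y(G_1)}-\frac{CTR(G_0|r)}{Y(G_0)}$, $DIR(r)=\frac{CTR(G_1|r)}{CTR(G_0|r)}\cdot\frac{Y(G_0)}{Y(G_1)}$. *)

theory Defs
  imports Complex_Main
begin

text \<open>Candidates are represented by natural numbers (any finite population is
isomorphic to one drawn from nat). A population is given by the two disjoint,
nonempty, finite groups G0 (non-protected) and G1 (protected); the population
is their union. y is the relevance score.\<close>

type_synonym metric =
  "nat set \<Rightarrow> nat set \<Rightarrow> (nat \<Rightarrow> real) \<Rightarrow> nat set \<Rightarrow> (nat \<Rightarrow> nat) \<Rightarrow> real option"

definition valid_setting ::
  "nat set \<Rightarrow> nat set \<Rightarrow> (nat \<Rightarrow> real) \<Rightarrow> nat set \<Rightarrow> (nat \<Rightarrow> nat) \<Rightarrow> bool" where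
  "valid_setting G0 G1 y D r \<longleftrightarrow>
     finite G0 \<and> finite G1 \<and> G0 \<noteq> {} \<and> G1 \<noteq> {} \<and> G0 \<inter> G1 = {} \<and>
     D \<subseteq> G0 \<union> G1 \<and> bij_betw r {1..card D} D"

definition pos_bias :: "nat \<Rightarrow> real" where
  "pos_bias k = 1 / log 2 (real k + 1)"

definition position :: "nat set \<Rightarrow> (nat \<Rightarrow> nat) \<Rightarrow> nat \<Rightarrow> nat" where
  "position D r d = inv_into {1..card D} r d"

definition exposure :: "nat set \<Rightarrow> nat set \<Rightarrow> (nat \<Rightarrow> nat) \<Rightarrow> real" where
  "exposure G D r = (1 / real (card G)) * (\<Sum>d\<in>G \<inter> D. pos_bias (position D r d))"

definition avg_rel :: "nat set \<Rightarrow> (nat \<Rightarrow> real) \<Rightarrow> real" where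
  "avg_rel G y = (1 / real (card G)) * (\<Sum>d\<in>G. y d)"

definition ctr :: "nat set \<Rightarrow> (nat \<Rightarrow> real) \<Rightarrow> nat set \<Rightarrow> (nat \<Rightarrow> nat) \<Rightarrow> real" where
  "ctr G y D r = (1 / real (card G)) * (\<Sum>d\<in>G \<inter> D. pos_bias (position D r d) * y d)"

text \<open>Metrics return None when a division by zero makes them undefined.\<close>

definition ED :: metric where
  "ED G0 G1 y D r = Some (exposure G1 D r - exposure G0 D r)"

definition ER :: metric where
  "ER G0 G1 y D r =
     (if exposure G0 D r = 0 then None else Some (exposure G1 D r / exposure G0 D r))"

definition DTD :: metric where
  "DTD G0 G1 y D r =
     (if avg_rel G1 y = 0 \<or> avg_rel G0 y = 0 then None
      else Some (exposure G1 D r / avg_rel G1 y - exposure G0 D r / avg_rel G0 y))"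

definition DTR :: metric where
  "DTR G0 G1 y D r =
     (if exposure G0 D r = 0 \<or> avg_rel G1 y = 0 then None
      else Some ((exposure G1 D r / exposure G0 D r) * (avg_rel G0 y / avg_rel G1 y)))"

definition DID :: metric where
  "DID G0 G1 y D r =
     (if avg_rel G1 y = 0 \<or> avg_rel G0 y = 0 then None
      else Some (ctr G1 y D r / avg_rel G1 y - ctr G0 y D r / avg_rel G0 y))"

definition DIR :: metric where
  "DIR G0 G1 y D r =
     (if ctr G0 y D r = 0 \<or> avg_rel G1 y = 0 then None
      else Some ((ctr G1 y D r / ctr G0 y D r) * (avg_rel G0 y / avg_rel G1 y)))"

definition satisfies_boundedness :: "metric \<Rightarrow> bool" where
  "satisfies_boundedness m \<longleftrightarrow>
     (\<exists>vmin vmax :: real. \<forall>G0 G1 y D r. valid_setting G0 G1 y D r \<longrightarrow>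
        (\<exists>v. m G0 G1 y D r = Some v \<and> vmin \<le> v \<and> v \<le> vmax))"

end

theory Submission
  imports Defs
begin

text \<open>Exposures are averages of position biases, which lie in [0, 1]; hence ED always lies
in [-1, 1]. Each of the other metrics divides by an exposure, an average relevance or a
click-through rate, and all of these vanish for the empty candidate set with all relevances
zero, so those metrics are not even well-defined on every setting.\<close>

lemma pos_bias_nonneg: "0 \<le> pos_bias k"
  by (simp add: pos_bias_def)

text \<open>The case k = 0 holds only because 1 / 0 = 0; positions start at 1.\<close>

lemma pos_bias_le_1: "pos_bias k \<le> 1"
proof (cases "k = 0")
  case True
  then show ?thesis by (simp add: pos_bias_def)
next
  case False
  then have "log 2 2 \<le> log 2 (real k + 1)"
    by (subst log_le_cancel_iff) auto
  then show ?thesis by (simp add: pos_bias_def)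
qed

lemma exposure_nonneg: "0 \<le> exposure G D r"
  unfolding exposure_def by (simp add: sum_nonneg pos_bias_nonneg)

lemma exposure_le_1:
  assumes "finite G"
  shows "exposure G D r \<le> 1"
proof -
  have "(\<Sum>d\<in>G \<inter> D. pos_bias (position D r d)) \<le> real (card (G \<inter> D))"
    using sum_bounded_above[of "G \<inter> D" "\<lambda>d. pos_bias (position D r d)" 1]
    by (simp add: pos_bias_le_1)
  also have "\<dots> \<le> real (card G)"
    using assms by (simp add: card_mono)
  finally show ?thesis
    using assms by (simp add: exposure_def divide_le_eq_1 card_gt_0_iff)
qed

lemma satisfies_boundedness_ED: "satisfies_boundedness ED"
  unfolding satisfies_boundedness_def
proof (rule exI[of _ "-1"], rule exI[of _ 1], intro allI impI)
  fix G0 G1 y D r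
  assume "valid_setting G0 G1 y D r"
  then have "finite G0" "finite G1"
    by (simp_all add: valid_setting_def)
  then have "exposure G1 D r - exposure G0 D r \<in> {-1..1}"
    using exposure_nonneg[of G0 D r] exposure_nonneg[of G1 D r]
      exposure_le_1[of G0 D r] exposure_le_1[of G1 D r] by simp
  then show "\<exists>v. ED G0 G1 y D r = Some v \<and> - 1 \<le> v \<and> v \<le> 1"
    by (simp add: ED_def)
qed

lemma not_satisfies_boundedness_if_undefined:
  assumes "valid_setting G0 G1 y D r" and "m G0 G1 y D r = None"
  shows "\<not> satisfies_boundedness m"
  using assms unfolding satisfies_boundedness_def by force

lemma valid_setting_empty_ranking: "valid_setting {0} {1} y {} r"
  by (simp add: valid_setting_def bij_betw_def)

lemma exposure_empty [simp]: "exposure G {} r = 0"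
  by (simp add: exposure_def)

lemma ctr_empty [simp]: "ctr G y {} r = 0"
  by (simp add: ctr_def)

lemma avg_rel_zero [simp]: "avg_rel G (\<lambda>_. 0) = 0"
  by (simp add: avg_rel_def)

theorem theorem3:
  shows "satisfies_boundedness ED \<and> \<not> satisfies_boundedness ER \<and>
         \<not> satisfies_boundedness DTD \<and> \<not> satisfies_boundedness DTR \<and>
         \<not> satisfies_boundedness DID \<and> \<not> satisfies_boundedness DIR"
proof (intro conjI satisfies_boundedness_ED)
  note unbounded_if_undefined =
    not_satisfies_boundedness_if_undefined[OF valid_setting_empty_ranking,
      where y = "\<lambda>_. 0" and r = id]
  show "\<not> satisfies_boundedness ER" by (rule unbounded_if_undefined) (simp add: ER_def)
  show "\<not> satisfies_boundedness DTD" by (rule unbounded_if_undefined) (simp add: DTD_def)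
  show "\<not> satisfies_boundedness DTR" by (rule unbounded_if_undefined) (simp add: DTR_def)
  show "\<not> satisfies_boundedness DID" by (rule unbounded_if_undefined) (simp add: DID_def)
  show "\<not> satisfies_boundedness DIR" by (rule unbounded_if_undefined) (simp add: DIR_def)
qed

end
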